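(* Let $n\in\mathbb N$. Then there exist $k\in\mathbb N$ and a unital ${}^\ast$-homomorphism $Z_{n,n+1}\to Z_{2^k,2^k+1}$.
   Context: For natural numbers $p,q$, $Z_{p,q}=\{f\in C([0,1],M_p\otimes M_q): f(0)\in M_p\otimes1_q,\ f(1)\in1_p\otimes M_q\}$. *)

theory Defs
  imports "HOL-Analysis.Analysis"
begin

text \<open>Matrices in M_p \<otimes> M_q = M_{pq} are represented as complex-valued functions on
 pairs of tensor indices (i,j), i<p, j<q, vanishing outside the index set.
 Elements of C([0,1], M_p \<otimes> M_q) are functions real \<Rightarrow> matrix, vanishing outside [0,1]
 (canonical representatives), continuous on [0,1] (entrywise, equivalently in norm).\<close>

type_synonym tmat = "nat \<times> nat \<Rightarrow> nat \<times> nat \<Rightarrow> complex"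
type_synonym tfun = "real \<Rightarrow> tmat"

definition tidx :: "nat \<Rightarrow> nat \<Rightarrow> (nat \<times> nat) set" where
  "tidx p q = {..<p} \<times> {..<q}"

definition is_tmat :: "nat \<Rightarrow> nat \<Rightarrow> tmat \<Rightarrow> bool" where
  "is_tmat p q A \<longleftrightarrow> (\<forall>a b. (a \<notin> tidx p q \<or> b \<notin> tidx p q) \<longrightarrow> A a b = 0)"

definition in_left :: "nat \<Rightarrow> nat \<Rightarrow> tmat \<Rightarrow> bool" where
  "in_left p q A \<longleftrightarrow> (\<exists>M :: nat \<Rightarrow> nat \<Rightarrow> complex. \<forall>i j i' j'.
      i < p \<longrightarrow> j < q \<longrightarrow> i' < p \<longrightarrow> j' < q \<longrightarrow>
      A (i,j) (i',j') = M i i' * (if j = j' then 1 else 0))"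

definition in_right :: "nat \<Rightarrow> nat \<Rightarrow> tmat \<Rightarrow> bool" where
  "in_right p q A \<longleftrightarrow> (\<exists>M :: nat \<Rightarrow> nat \<Rightarrow> complex. \<forall>i j i' j'.
      i < p \<longrightarrow> j < q \<longrightarrow> i' < p \<longrightarrow> j' < q \<longrightarrow>
      A (i,j) (i',j') = (if i = i' then 1 else 0) * M j j')"

definition Zalg :: "nat \<Rightarrow> nat \<Rightarrow> tfun set" where
  "Zalg p q = {f. (\<forall>t. is_tmat p q (f t))
      \<and> (\<forall>t. t \<notin> {0..1} \<longrightarrow> f t = (\<lambda>_ _. 0))
      \<and> (\<forall>a b. continuous_on {0..1} (\<lambda>t. f t a b))
      \<and> in_left p q (f 0) \<and> in_right p q (f 1)}"

definition zadd :: "tfun \<Rightarrow> tfun \<Rightarrow> tfun" where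
  "zadd f g = (\<lambda>t a b. f t a b + g t a b)"

definition zscale :: "complex \<Rightarrow> tfun \<Rightarrow> tfun" where
  "zscale c f = (\<lambda>t a b. c * f t a b)"

definition zmult :: "nat \<Rightarrow> nat \<Rightarrow> tfun \<Rightarrow> tfun \<Rightarrow> tfun" where
  "zmult p q f g = (\<lambda>t a b. \<Sum>c\<in>tidx p q. f t a c * g t c b)"

definition zadj :: "tfun \<Rightarrow> tfun" where
  "zadj f = (\<lambda>t a b. cnj (f t b a))"

definition zunit :: "nat \<Rightarrow> nat \<Rightarrow> tfun" where
  "zunit p q = (\<lambda>t a b. if t \<in> {0..1} \<and> a \<in> tidx p q \<and> a = b then 1 else 0)"

definition unital_star_hom :: "nat \<Rightarrow> nat \<Rightarrow> nat \<Rightarrow> nat \<Rightarrow> (tfun \<Rightarrow> tfun) \<Rightarrow> bool" where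
  "unital_star_hom p q p' q' \<phi> \<longleftrightarrow>
     (\<forall>f\<in>Zalg p q. \<phi> f \<in> Zalg p' q')
   \<and> (\<forall>f\<in>Zalg p q. \<forall>g\<in>Zalg p q. \<phi> (zadd f g) = zadd (\<phi> f) (\<phi> g))
   \<and> (\<forall>c. \<forall>f\<in>Zalg p q. \<phi> (zscale c f) = zscale c (\<phi> f))
   \<and> (\<forall>f\<in>Zalg p q. \<forall>g\<in>Zalg p q. \<phi> (zmult p q f g) = zmult p' q' (\<phi> f) (\<phi> g))
   \<and> (\<forall>f\<in>Zalg p q. \<phi> (zadj f) = zadj (\<phi> f))
   \<and> \<phi> (zunit p q) = zunit p' q'"

end

theory Submission
  imports Defs
begin

(* Write Z = Z_{n,m}. For sizes r, s \<in> {n, m} there is a unital *-homomorphism from Z to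
   C([0,1], M_r \<otimes> M_s) whose value at 0 is x \<otimes> 1 with x depending only on r (the left factor
   of f(0) if r = n, the right factor of f(1) if r = m), and whose value at 1 is 1 \<otimes> y with y
   depending only on s in the same way: the identity for (n, m), the flip t \<mapsto> f(1 - t) with
   exchanged tensor factors for (m, n), and t \<mapsto> U_t (x \<otimes> 1) U_t^* for r = s, where U_t is a
   unitary path from 1 to the tensor flip. Because the endpoint factors only depend on the sizes,
   the block diagonal matrix with a blocks of size n and b of size m along the first tensor factor
   and a', b' along the second lies in Z_{an+bm, a'n+b'm}. Every N \<ge> n(n - 1) is of the form
   an + b(n + 1), so this applies to N = 2^k and N = 2^k + 1 for k = n^2. *)

section \<open>Matrices over a finite index set\<close>

definition mat_mult :: "'a set \<Rightarrow> ('a \<Rightarrow> 'a \<Rightarrow> complex) \<Rightarrow> ('a \<Rightarrow> 'a \<Rightarrow> complex) \<Rightarrow> 'a \<Rightarrow> 'a \<Rightarrow> complex"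
  where "mat_mult I X Y = (\<lambda>x y. \<Sum>z\<in>I. X x z * Y z y)"

definition mat_adj :: "('a \<Rightarrow> 'a \<Rightarrow> complex) \<Rightarrow> 'a \<Rightarrow> 'a \<Rightarrow> complex"
  where "mat_adj X = (\<lambda>x y. cnj (X y x))"

definition mat_one :: "'a \<Rightarrow> 'a \<Rightarrow> complex"
  where "mat_one = (\<lambda>x y. if x = y then 1 else 0)"

definition unitary_on :: "'a set \<Rightarrow> ('a \<Rightarrow> 'a \<Rightarrow> complex) \<Rightarrow> bool"
  where "unitary_on I U \<longleftrightarrow> (\<forall>x\<in>I. \<forall>y\<in>I.
     mat_mult I (mat_adj U) U x y = mat_one x y \<and> mat_mult I U (mat_adj U) x y = mat_one x y)"

definition mat_conj :: "'a set \<Rightarrow> ('a \<Rightarrow> 'a \<Rightarrow> complex) \<Rightarrow> ('a \<Rightarrow> 'a \<Rightarrow> complex) \<Rightarrow> 'a \<Rightarrow> 'a \<Rightarrow> complex"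
  where "mat_conj I U X = mat_mult I (mat_mult I U X) (mat_adj U)"

lemma mat_mult_assoc:
  assumes "finite I"
  shows "mat_mult I (mat_mult I X Y) Z = mat_mult I X (mat_mult I Y Z)"
proof (intro ext)
  fix x y
  have "(\<Sum>c\<in>I. (\<Sum>d\<in>I. X x d * Y d c) * Z c y) = (\<Sum>c\<in>I. \<Sum>d\<in>I. X x d * Y d c * Z c y)"
    by (simp add: sum_distrib_right)
  also have "\<dots> = (\<Sum>d\<in>I. \<Sum>c\<in>I. X x d * Y d c * Z c y)"
    by (rule sum.swap)
  also have "\<dots> = (\<Sum>d\<in>I. X x d * (\<Sum>c\<in>I. Y d c * Z c y))"
    by (simp add: sum_distrib_left mult.assoc)
  finally show "mat_mult I (mat_mult I X Y) Z x y = mat_mult I X (mat_mult I Y Z) x y"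
    by (simp add: mat_mult_def)
qed

lemma mat_mult_cong:
  assumes "\<And>z. z \<in> I \<Longrightarrow> X x z = X' x z" "\<And>z. z \<in> I \<Longrightarrow> Y z y = Y' z y"
  shows "mat_mult I X Y x y = mat_mult I X' Y' x y"
  using assms by (simp add: mat_mult_def)

lemma mat_mult_one_left:
  assumes "finite I" "x \<in> I"
  shows "mat_mult I mat_one X x y = X x y"
  using assms by (simp add: mat_mult_def mat_one_def if_distrib[of "\<lambda>a. a * _"] sum.delta cong: if_cong)

lemma mat_mult_one_right:
  assumes "finite I" "y \<in> I"
  shows "mat_mult I X mat_one x y = X x y"
  using assms by (simp add: mat_mult_def mat_one_def if_distrib[of "\<lambda>a. _ * a"] sum.delta' cong: if_cong)

lemma mat_adj_mult: "mat_adj (mat_mult I X Y) = mat_mult I (mat_adj Y) (mat_adj X)"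
  by (auto simp: mat_adj_def mat_mult_def mult.commute intro!: ext)

lemma mat_adj_one [simp]: "mat_adj mat_one = mat_one"
  by (simp add: mat_adj_def mat_one_def fun_eq_iff)

lemma mat_adj_adj [simp]: "mat_adj (mat_adj X) = X"
  by (simp add: mat_adj_def)

lemma mat_conj_cong:
  assumes "\<And>x y. x \<in> I \<Longrightarrow> y \<in> I \<Longrightarrow> X x y = X' x y"
  shows "mat_conj I U X x y = mat_conj I U X' x y"
  using assms by (simp add: mat_conj_def mat_mult_def)

lemma mat_conj_add: "mat_conj I U (\<lambda>x y. X x y + Y x y) x y = mat_conj I U X x y + mat_conj I U Y x y"
  by (simp add: mat_conj_def mat_mult_def ring_distribs sum.distrib)

lemma mat_conj_scale: "mat_conj I U (\<lambda>x y. c * X x y) x y = c * mat_conj I U X x y"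
  by (simp add: mat_conj_def mat_mult_def sum_distrib_left sum_distrib_right mult_ac)

lemma mat_conj_adj:
  assumes "finite I"
  shows "mat_conj I U (mat_adj X) = mat_adj (mat_conj I U X)"
  using assms by (simp add: mat_conj_def mat_adj_mult mat_mult_assoc)

lemma mat_conj_mult:
  assumes "finite I" "unitary_on I U" "x \<in> I" "y \<in> I"
  shows "mat_conj I U (mat_mult I X Y) x y = mat_mult I (mat_conj I U X) (mat_conj I U Y) x y"
proof -
  have "mat_mult I (mat_conj I U X) (mat_conj I U Y) x y
      = mat_mult I (mat_mult I U X) (mat_mult I (mat_mult I (mat_adj U) U) (mat_mult I Y (mat_adj U))) x y"
    using assms(1) by (simp add: mat_conj_def mat_mult_assoc)
  also have "\<dots> = mat_mult I (mat_mult I U X) (mat_mult I mat_one (mat_mult I Y (mat_adj U))) x y"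
    using assms(2) unfolding unitary_on_def
    by (intro mat_mult_cong[OF refl]) (simp add: mat_mult_def)
  also have "\<dots> = mat_mult I (mat_mult I U X) (mat_mult I Y (mat_adj U)) x y"
    using assms(1) by (intro mat_mult_cong[OF refl]) (simp add: mat_mult_one_left)
  finally show ?thesis
    using assms(1) by (simp add: mat_conj_def mat_mult_assoc)
qed

lemma mat_conj_one:
  assumes "finite I" "unitary_on I U" "x \<in> I" "y \<in> I"
  shows "mat_conj I U mat_one x y = mat_one x y"
proof -
  have "mat_conj I U mat_one x y = mat_mult I U (mat_adj U) x y"
    unfolding mat_conj_def using assms(1) by (intro mat_mult_cong refl) (simp add: mat_mult_one_right)
  then show ?thesis
    using assms unfolding unitary_on_def by simp
qed

section \<open>Tensor factors\<close>

lemma finite_tidx [simp]: "finite (tidx p q)"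
  by (simp add: tidx_def)

lemma mem_tidx_iff: "x \<in> tidx p q \<longleftrightarrow> fst x < p \<and> snd x < q"
  by (auto simp: tidx_def mem_Times_iff)

lemma swap_mem_tidx_iff [simp]: "prod.swap x \<in> tidx q p \<longleftrightarrow> x \<in> tidx p q"
  by (auto simp: mem_tidx_iff)

definition tensor_one :: "(nat \<Rightarrow> nat \<Rightarrow> complex) \<Rightarrow> tmat"
  where "tensor_one M = (\<lambda>x y. M (fst x) (fst y) * mat_one (snd x) (snd y))"

definition one_tensor :: "(nat \<Rightarrow> nat \<Rightarrow> complex) \<Rightarrow> tmat"
  where "one_tensor M = (\<lambda>x y. mat_one (fst x) (fst y) * M (snd x) (snd y))"

definition tswap :: "tmat \<Rightarrow> tmat"
  where "tswap A = (\<lambda>x y. A (prod.swap x) (prod.swap y))"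

definition has_left_factor :: "nat \<Rightarrow> nat \<Rightarrow> (nat \<Rightarrow> nat \<Rightarrow> complex) \<Rightarrow> tmat \<Rightarrow> bool"
  where "has_left_factor p q M A \<longleftrightarrow> (\<forall>x\<in>tidx p q. \<forall>y\<in>tidx p q. A x y = tensor_one M x y)"

definition has_right_factor :: "nat \<Rightarrow> nat \<Rightarrow> (nat \<Rightarrow> nat \<Rightarrow> complex) \<Rightarrow> tmat \<Rightarrow> bool"
  where "has_right_factor p q M A \<longleftrightarrow> (\<forall>x\<in>tidx p q. \<forall>y\<in>tidx p q. A x y = one_tensor M x y)"

lemma in_left_iff: "in_left p q A \<longleftrightarrow> (\<exists>M. has_left_factor p q M A)"
  unfolding in_left_def has_left_factor_def tensor_one_def mat_one_def
  by (intro ex_cong1) (auto simp: tidx_def)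

lemma in_right_iff: "in_right p q A \<longleftrightarrow> (\<exists>M. has_right_factor p q M A)"
  unfolding in_right_def has_right_factor_def one_tensor_def mat_one_def
  by (intro ex_cong1) (auto simp: tidx_def)

lemma one_tensor_eq_tswap: "one_tensor M = tswap (tensor_one M)"
  by (simp add: one_tensor_def tswap_def tensor_one_def mult.commute)

lemma tswap_tswap [simp]: "tswap (tswap A) = A"
  by (simp add: tswap_def)

lemma has_left_factor_tswap_iff: "has_left_factor q p M (tswap A) \<longleftrightarrow> has_right_factor p q M A"
proof -
  have "(\<forall>x\<in>tidx q p. \<forall>y\<in>tidx q p. P (prod.swap x) (prod.swap y)) \<longleftrightarrow> (\<forall>x\<in>tidx p q. \<forall>y\<in>tidx p q. P x y)"
    for P :: "nat \<times> nat \<Rightarrow> nat \<times> nat \<Rightarrow> bool"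
    by (metis swap_mem_tidx_iff swap_swap)
  from this[of "\<lambda>x y. A x y = tensor_one M (prod.swap x) (prod.swap y)"] show ?thesis
    by (simp add: has_left_factor_def has_right_factor_def one_tensor_eq_tswap tswap_def)
qed

lemma has_right_factor_tswap_iff: "has_right_factor q p M (tswap A) \<longleftrightarrow> has_left_factor p q M A"
  using has_left_factor_tswap_iff[of p q M "tswap A"] by simp

lemma tensor_one_cong:
  assumes "\<And>i j. i < p \<Longrightarrow> j < p \<Longrightarrow> M i j = N i j" "x \<in> tidx p q" "y \<in> tidx p q"
  shows "tensor_one M x y = tensor_one N x y"
  using assms by (simp add: tensor_one_def mem_tidx_iff)

lemma tensor_one_adj: "tensor_one (mat_adj M) = mat_adj (tensor_one M)"
  by (auto simp: tensor_one_def mat_adj_def mat_one_def intro!: ext)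

lemma tensor_one_one: "tensor_one mat_one = mat_one"
  by (auto simp: tensor_one_def mat_one_def prod_eq_iff intro!: ext)

lemma tensor_one_mult:
  assumes "x \<in> tidx p q" "y \<in> tidx p q"
  shows "mat_mult (tidx p q) (tensor_one M) (tensor_one N) x y = tensor_one (mat_mult {..<p} M N) x y"
proof -
  have "mat_mult (tidx p q) (tensor_one M) (tensor_one N) x y
      = (\<Sum>k<p. \<Sum>l<q. M (fst x) k * N k (fst y) * (mat_one (snd x) l * mat_one l (snd y)))"
    by (simp add: mat_mult_def tensor_one_def tidx_def sum.cartesian_product split_def mult_ac)
  also have "\<dots> = (\<Sum>k<p. M (fst x) k * N k (fst y) * mat_one (snd x) (snd y))"
  proof -
    have "(\<Sum>l<q. mat_one (snd x) l * mat_one l (snd y)) = mat_one (snd x) (snd y)"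
      using mat_mult_one_left[of "{..<q}" "snd x" mat_one "snd y"] assms
      by (simp add: mat_mult_def mem_tidx_iff)
    then show ?thesis
      by (simp add: sum_distrib_left[symmetric])
  qed
  finally show ?thesis
    by (simp add: tensor_one_def mat_mult_def sum_distrib_right)
qed

lemma mat_mult_tswap: "mat_mult (tidx q p) (tswap A) (tswap B) = tswap (mat_mult (tidx p q) A B)"
proof (intro ext)
  fix x y
  show "mat_mult (tidx q p) (tswap A) (tswap B) x y = tswap (mat_mult (tidx p q) A B) x y"
    unfolding mat_mult_def tswap_def
    by (rule sum.reindex_bij_witness[of _ prod.swap prod.swap]) auto
qed

section \<open>Rotating the tensor factors into each other\<close>

(* A unitary path from 1 to i times the tensor flip, which conjugates x \<otimes> 1 into 1 \<otimes> x. *)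
definition rotation :: "real \<Rightarrow> nat \<times> nat \<Rightarrow> nat \<times> nat \<Rightarrow> complex"
  where "rotation t x y =
    of_real (cos (pi * t / 2)) * mat_one x y + \<i> * of_real (sin (pi * t / 2)) * mat_one (prod.swap x) y"

lemma rotation_0: "rotation 0 = mat_one"
  by (simp add: rotation_def fun_eq_iff)

lemma rotation_1: "rotation 1 x y = \<i> * mat_one (prod.swap x) y"
  by (simp add: rotation_def)

lemma continuous_on_rotation: "continuous_on S (\<lambda>t. rotation t x y)"
  unfolding rotation_def by (intro continuous_intros) simp_all

lemma swap_eq_iff: "prod.swap z = x \<longleftrightarrow> z = prod.swap x"
  by auto

lemma cos_sq_sub_i_sin_sq:
  "complex_of_real (cos a) * complex_of_real (cos a) - \<i> * complex_of_real (sin a) * (\<i> * complex_of_real (sin a)) = 1"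
proof -
  have "complex_of_real (cos a) * complex_of_real (cos a) + complex_of_real (sin a) * complex_of_real (sin a) = 1"
    by (metis of_real_add of_real_mult of_real_1 sin_cos_squared_add3)
  then show ?thesis
    by (simp add: algebra_simps)
qed

lemma sum_swap_delta:
  assumes "finite I"
  shows "(\<Sum>z\<in>I. if x = prod.swap z then f z else 0) = (if prod.swap x \<in> I then f (prod.swap x) else 0)"
proof -
  have "(\<Sum>z\<in>I. if x = prod.swap z then f z else 0) = (\<Sum>z\<in>I. if z = prod.swap x then f z else 0)"
    by (intro sum.cong) auto
  then show ?thesis
    using assms by (simp add: sum.delta)
qed

lemma unitary_rotation: "unitary_on (tidx p p) (rotation t)"
  unfolding unitary_on_def mat_mult_def mat_adj_def rotation_def mat_one_def
  by (simp add: ring_distribs sum.distrib swap_eq_iff if_distrib[of "\<lambda>a. a * _"]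
      if_distrib[of "\<lambda>a. _ * a"] if_distrib[of cnj] sum.delta sum_swap_delta cos_sq_sub_i_sin_sq cong: if_cong)

lemma mat_conj_rotation_0:
  assumes "x \<in> I" "y \<in> I" "finite I"
  shows "mat_conj I (rotation 0) X x y = X x y"
proof -
  have "mat_conj I (rotation 0) X x y = mat_mult I mat_one X x y"
    using assms by (simp add: mat_conj_def rotation_0 mat_mult_one_right)
  also have "\<dots> = X x y"
    using assms by (simp add: mat_mult_one_left)
  finally show ?thesis .
qed

lemma mat_conj_rotation_1:
  assumes "x \<in> tidx p p" "y \<in> tidx p p"
  shows "mat_conj (tidx p p) (rotation 1) X x y = X (prod.swap x) (prod.swap y)"
  using assms
  by (simp add: mat_conj_def mat_mult_def mat_adj_def rotation_1 mat_one_def if_distrib[of "\<lambda>a. a * _"]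
      if_distrib[of "\<lambda>a. _ * a"] if_distrib[of cnj] swap_eq_iff sum.delta sum_swap_delta cong: if_cong)
    (simp add: algebra_simps)

section \<open>Homomorphisms with prescribed endpoint factors\<close>

lemma zadd_apply: "zadd f g t x y = f t x y + g t x y"
  by (simp add: zadd_def)

lemma zscale_apply: "zscale c f t x y = c * f t x y"
  by (simp add: zscale_def)

lemma zadj_apply: "zadj f t x y = cnj (f t y x)"
  by (simp add: zadj_def)

lemma zmult_eq: "zmult p q f g = (\<lambda>t. mat_mult (tidx p q) (f t) (g t))"
  by (simp add: zmult_def mat_mult_def)

lemma ZalgI:
  assumes "\<And>t. is_tmat p q (f t)"
    and "\<And>t. t \<notin> {0..1} \<Longrightarrow> f t = (\<lambda>_ _. 0)"
    and "\<And>x y. continuous_on {0..1} (\<lambda>t. f t x y)"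
    and "in_left p q (f 0)" and "in_right p q (f 1)"
  shows "f \<in> Zalg p q"
  using assms by (simp add: Zalg_def)

lemma ZalgD:
  assumes "f \<in> Zalg p q"
  shows "is_tmat p q (f t)" and "t \<notin> {0..1} \<Longrightarrow> f t = (\<lambda>_ _. 0)"
    and "continuous_on {0..1} (\<lambda>t. f t x y)"
    and "in_left p q (f 0)" and "in_right p q (f 1)"
  using assms unfolding Zalg_def by blast+

lemma is_tmatD:
  assumes "is_tmat p q A" "x \<notin> tidx p q \<or> y \<notin> tidx p q"
  shows "A x y = 0"
  using assms unfolding is_tmat_def by blast

lemma unital_star_homD:
  assumes "unital_star_hom n m p q \<phi>"
  shows "f \<in> Zalg n m \<Longrightarrow> \<phi> f \<in> Zalg p q"
    and "f \<in> Zalg n m \<Longrightarrow> g \<in> Zalg n m \<Longrightarrow> \<phi> (zadd f g) = zadd (\<phi> f) (\<phi> g)"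
    and "f \<in> Zalg n m \<Longrightarrow> \<phi> (zscale c f) = zscale c (\<phi> f)"
    and "f \<in> Zalg n m \<Longrightarrow> g \<in> Zalg n m \<Longrightarrow> \<phi> (zmult n m f g) = zmult p q (\<phi> f) (\<phi> g)"
    and "f \<in> Zalg n m \<Longrightarrow> \<phi> (zadj f) = zadj (\<phi> f)"
    and "\<phi> (zunit n m) = zunit p q"
  using assms unfolding unital_star_hom_def by blast+

lemma unital_star_hom_comp:
  assumes "unital_star_hom n m p q \<phi>" "unital_star_hom p q r s \<psi>"
  shows "unital_star_hom n m r s (\<psi> \<circ> \<phi>)"
  using assms unfolding unital_star_hom_def by simp

(* The factors x, y in f 0 = x \<otimes> 1 and f 1 = 1 \<otimes> y, read off at index 0 of the other tensor factor. *)
definition left_end :: "tfun \<Rightarrow> nat \<Rightarrow> nat \<Rightarrow> complex"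
  where "left_end f i j = f 0 (i, 0) (j, 0)"

definition right_end :: "tfun \<Rightarrow> nat \<Rightarrow> nat \<Rightarrow> complex"
  where "right_end f i j = f 1 (0, i) (0, j)"

lemma has_left_factor_left_end:
  assumes "in_left p q (f 0)" "0 < q"
  shows "has_left_factor p q (left_end f) (f 0)"
proof -
  obtain M where M: "has_left_factor p q M (f 0)"
    using assms(1) by (auto simp: in_left_iff)
  then have "M i j = left_end f i j" if "i < p" "j < p" for i j
    using that assms(2) by (simp add: has_left_factor_def left_end_def tensor_one_def mat_one_def mem_tidx_iff)
  with M show ?thesis
    by (simp add: has_left_factor_def tensor_one_def mem_tidx_iff)
qed

lemma has_right_factor_right_end:
  assumes "in_right p q (f 1)" "0 < p"
  shows "has_right_factor p q (right_end f) (f 1)"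
proof -
  obtain M where M: "has_right_factor p q M (f 1)"
    using assms(1) by (auto simp: in_right_iff)
  then have "M i j = right_end f i j" if "i < q" "j < q" for i j
    using that assms(2) by (simp add: has_right_factor_def right_end_def one_tensor_def mat_one_def mem_tidx_iff)
  with M show ?thesis
    by (simp add: has_right_factor_def one_tensor_def mem_tidx_iff)
qed

lemma left_end_zmult:
  assumes "f \<in> Zalg p q" "g \<in> Zalg p q" "0 < q" "i < p" "j < p"
  shows "left_end (zmult p q f g) i j = mat_mult {..<p} (left_end f) (left_end g) i j"
proof -
  have ij: "(i, 0) \<in> tidx p q" "(j, 0) \<in> tidx p q"
    using assms(3-5) by (simp_all add: mem_tidx_iff)
  have "left_end (zmult p q f g) i j = mat_mult (tidx p q) (f 0) (g 0) (i, 0) (j, 0)"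
    by (simp add: left_end_def zmult_eq)
  also have "\<dots> = mat_mult (tidx p q) (tensor_one (left_end f)) (tensor_one (left_end g)) (i, 0) (j, 0)"
    using has_left_factor_left_end[of p q f, OF ZalgD(4)[OF assms(1)] assms(3)]
      has_left_factor_left_end[of p q g, OF ZalgD(4)[OF assms(2)] assms(3)] ij
    by (intro mat_mult_cong) (simp_all add: has_left_factor_def)
  also have "\<dots> = mat_mult {..<p} (left_end f) (left_end g) i j"
    using tensor_one_mult[OF ij] by (simp add: tensor_one_def mat_one_def)
  finally show ?thesis .
qed

lemma left_end_zunit:
  assumes "0 < q" "i < p" "j < p"
  shows "left_end (zunit p q) i j = mat_one i j"
  using assms by (simp add: left_end_def zunit_def mat_one_def mem_tidx_iff)

(* A block diagonal sum along the first tensor factor stays in Z only if the summands share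
   the right factor at 1 (and symmetrically), so homomorphisms carry their endpoint factors. *)
definition unital_star_hom_ends ::
    "nat \<Rightarrow> nat \<Rightarrow> nat \<Rightarrow> nat \<Rightarrow> (tfun \<Rightarrow> tfun) \<Rightarrow>
      (tfun \<Rightarrow> nat \<Rightarrow> nat \<Rightarrow> complex) \<Rightarrow> (tfun \<Rightarrow> nat \<Rightarrow> nat \<Rightarrow> complex) \<Rightarrow> bool"
  where "unital_star_hom_ends n m p q \<phi> L R \<longleftrightarrow> unital_star_hom n m p q \<phi> \<and>
    (\<forall>f\<in>Zalg n m. has_left_factor p q (L f) (\<phi> f 0) \<and> has_right_factor p q (R f) (\<phi> f 1))"

lemma unital_star_hom_endsD:
  assumes "unital_star_hom_ends n m p q \<phi> L R" "f \<in> Zalg n m"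
  shows "has_left_factor p q (L f) (\<phi> f 0)" "has_right_factor p q (R f) (\<phi> f 1)"
  using assms unfolding unital_star_hom_ends_def by blast+

lemma unital_star_hom_ends_comp:
  assumes "unital_star_hom_ends n m p q \<phi> L R" "unital_star_hom_ends p q r s \<psi> L' R'"
  shows "unital_star_hom_ends n m r s (\<psi> \<circ> \<phi>) (\<lambda>f. L' (\<phi> f)) (\<lambda>f. R' (\<phi> f))"
  using assms unital_star_hom_comp unfolding unital_star_hom_ends_def unital_star_hom_def by auto

lemma unital_star_hom_ends_id:
  assumes "0 < n" "0 < m"
  shows "unital_star_hom_ends n m n m id left_end right_end"
  using assms by (auto simp: unital_star_hom_ends_def unital_star_hom_def ZalgD
      intro: has_left_factor_left_end has_right_factor_right_end)

(* Z_{0,q} is the zero algebra, so the zero map is a unital *-homomorphism into it. *)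
lemma unital_star_hom_ends_zero:
  "unital_star_hom_ends n m 0 q (\<lambda>f t x y. 0) L R"
proof -
  have "(\<lambda>t x y. 0) \<in> Zalg 0 q"
    by (intro ZalgI) (auto simp: is_tmat_def in_left_def in_right_def)
  moreover have "zunit 0 q = (\<lambda>t x y. 0)"
    by (simp add: zunit_def tidx_def)
  ultimately show ?thesis
    by (simp add: unital_star_hom_ends_def unital_star_hom_def zadd_def zscale_def zmult_def zadj_def
        has_left_factor_def has_right_factor_def tidx_def)
qed

definition zflip :: "tfun \<Rightarrow> tfun"
  where "zflip f = (\<lambda>t. tswap (f (1 - t)))"

lemma zflip_Zalg:
  assumes "f \<in> Zalg p q"
  shows "zflip f \<in> Zalg q p"
proof (rule ZalgI)
  show "is_tmat q p (zflip f t)" for t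
    using ZalgD(1)[OF assms, of "1 - t"] unfolding is_tmat_def zflip_def tswap_def
    by (metis swap_mem_tidx_iff)
  show "zflip f t = (\<lambda>_ _. 0)" if "t \<notin> {0..1}" for t
  proof -
    have "1 - t \<notin> {0..1}"
      using that by auto
    then show ?thesis
      using ZalgD(2)[OF assms] by (simp add: zflip_def tswap_def)
  qed
  show "continuous_on {0..1} (\<lambda>t. zflip f t x y)" for x y
    unfolding zflip_def tswap_def
    by (rule continuous_on_compose2[OF ZalgD(3)[OF assms]]) (auto intro: continuous_intros)
  show "in_left q p (zflip f 0)" "in_right q p (zflip f 1)"
    using ZalgD(4,5)[OF assms]
    by (simp_all add: zflip_def in_left_iff in_right_iff has_left_factor_tswap_iff has_right_factor_tswap_iff)
qed

lemma unital_star_hom_zflip: "unital_star_hom p q q p zflip"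
proof -
  have "zflip (zadd f g) = zadd (zflip f) (zflip g)" "zflip (zscale c f) = zscale c (zflip f)"
    "zflip (zadj f) = zadj (zflip f)" for f g c
    by (simp_all add: zflip_def tswap_def zadd_def zscale_def zadj_def)
  moreover have "zflip (zmult p q f g) = zmult q p (zflip f) (zflip g)" for f g
    by (simp add: zflip_def zmult_eq mat_mult_tswap fun_eq_iff)
  moreover have "zflip (zunit p q) = zunit q p"
    by (auto simp: zflip_def zunit_def tswap_def fun_eq_iff prod_eq_iff)
  ultimately show ?thesis
    by (simp add: unital_star_hom_def zflip_Zalg)
qed

lemma left_end_zflip: "left_end (zflip f) = right_end f"
  by (simp add: left_end_def right_end_def zflip_def tswap_def fun_eq_iff)

lemma unital_star_hom_ends_zflip:
  assumes "unital_star_hom_ends n m p q \<phi> L R"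
  shows "unital_star_hom_ends n m q p (zflip \<circ> \<phi>) R L"
  using assms unital_star_hom_comp[OF _ unital_star_hom_zflip]
  by (simp add: unital_star_hom_ends_def zflip_def has_left_factor_tswap_iff has_right_factor_tswap_iff)

section \<open>The rotation homomorphism\<close>

definition rotation_hom :: "nat \<Rightarrow> tfun \<Rightarrow> tfun"
  where "rotation_hom p f = (\<lambda>t x y. if t \<in> {0..1} \<and> x \<in> tidx p p \<and> y \<in> tidx p p
    then mat_conj (tidx p p) (rotation t) (tensor_one (left_end f)) x y else 0)"

lemma has_left_factor_rotation_hom: "has_left_factor p p (left_end f) (rotation_hom p f 0)"
  by (simp add: has_left_factor_def rotation_hom_def mat_conj_rotation_0)

lemma has_right_factor_rotation_hom: "has_right_factor p p (left_end f) (rotation_hom p f 1)"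
  by (simp add: has_right_factor_def rotation_hom_def mat_conj_rotation_1 one_tensor_eq_tswap tswap_def)

lemma rotation_hom_Zalg: "rotation_hom p f \<in> Zalg p p"
proof (rule ZalgI)
  show "is_tmat p p (rotation_hom p f t)" for t
    by (simp add: is_tmat_def rotation_hom_def)
  show "rotation_hom p f t = (\<lambda>_ _. 0)" if "t \<notin> {0..1}" for t
    using that by (auto simp: rotation_hom_def fun_eq_iff)
  show "continuous_on {0..1} (\<lambda>t. rotation_hom p f t x y)" for x y
  proof (cases "x \<in> tidx p p \<and> y \<in> tidx p p")
    case True
    have eq: "rotation_hom p f t x y = mat_conj (tidx p p) (rotation t) (tensor_one (left_end f)) x y"
      if "t \<in> {0..1}" for t
      using True that by (simp add: rotation_hom_def)
    have "continuous_on {0..1} (\<lambda>t. mat_conj (tidx p p) (rotation t) (tensor_one (left_end f)) x y)"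
      unfolding mat_conj_def mat_mult_def mat_adj_def by (intro continuous_intros continuous_on_rotation)
    then show ?thesis
      by (rule continuous_on_eq) (simp add: eq)
  next
    case False
    then show ?thesis
      by (intro continuous_on_eq[OF continuous_on_const]) (auto simp: rotation_hom_def)
  qed
  show "in_left p p (rotation_hom p f 0)"
    using has_left_factor_rotation_hom by (auto simp: in_left_iff)
  show "in_right p p (rotation_hom p f 1)"
    using has_right_factor_rotation_hom by (auto simp: in_right_iff)
qed

lemma rotation_hom_zmult:
  assumes "f \<in> Zalg p q" "g \<in> Zalg p q" "0 < q"
  shows "rotation_hom p (zmult p q f g) = zmult p p (rotation_hom p f) (rotation_hom p g)"
proof (intro ext)
  fix t x y
  let ?I = "tidx p p" and ?Lf = "tensor_one (left_end f)" and ?Lg = "tensor_one (left_end g)"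
  show "rotation_hom p (zmult p q f g) t x y = zmult p p (rotation_hom p f) (rotation_hom p g) t x y"
  proof (cases "t \<in> {0..1} \<and> x \<in> ?I \<and> y \<in> ?I")
    case True
    have eq: "tensor_one (left_end (zmult p q f g)) a b = mat_mult ?I ?Lf ?Lg a b" if "a \<in> ?I" "b \<in> ?I" for a b
    proof -
      have "tensor_one (left_end (zmult p q f g)) a b = tensor_one (mat_mult {..<p} (left_end f) (left_end g)) a b"
        using that by (intro tensor_one_cong left_end_zmult assms)
      then show ?thesis
        using tensor_one_mult[OF that] by simp
    qed
    have "rotation_hom p (zmult p q f g) t x y = mat_conj ?I (rotation t) (mat_mult ?I ?Lf ?Lg) x y"
      using True by (simp add: rotation_hom_def mat_conj_cong[OF eq])
    also have "\<dots> = mat_mult ?I (mat_conj ?I (rotation t) ?Lf) (mat_conj ?I (rotation t) ?Lg) x y"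
      using True by (simp add: mat_conj_mult unitary_rotation)
    also have "\<dots> = zmult p p (rotation_hom p f) (rotation_hom p g) t x y"
      using True by (simp add: zmult_eq rotation_hom_def mat_mult_def)
    finally show ?thesis .
  next
    case False
    then show ?thesis
      by (auto simp: zmult_eq rotation_hom_def mat_mult_def intro!: sum.neutral)
  qed
qed

lemma rotation_hom_zunit:
  assumes "0 < q"
  shows "rotation_hom p (zunit p q) = zunit p p"
proof (intro ext)
  fix t x y
  show "rotation_hom p (zunit p q) t x y = zunit p p t x y"
  proof (cases "t \<in> {0..1} \<and> x \<in> tidx p p \<and> y \<in> tidx p p")
    case True
    have eq: "tensor_one (left_end (zunit p q)) a b = mat_one a b" if "a \<in> tidx p p" "b \<in> tidx p p" for a b
      using tensor_one_cong[OF left_end_zunit[OF assms] that] by (simp add: tensor_one_one)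
    have "rotation_hom p (zunit p q) t x y = mat_conj (tidx p p) (rotation t) mat_one x y"
      using True by (simp add: rotation_hom_def mat_conj_cong[OF eq])
    then show ?thesis
      using True by (simp add: mat_conj_one unitary_rotation) (simp add: zunit_def mat_one_def)
  qed (auto simp: rotation_hom_def zunit_def)
qed

lemma unital_star_hom_ends_rotation_hom:
  assumes "0 < q"
  shows "unital_star_hom_ends p q p p (rotation_hom p) left_end left_end"
proof -
  have "rotation_hom p (zadd f g) = zadd (rotation_hom p f) (rotation_hom p g)" for f g
  proof -
    have sum: "tensor_one (left_end (zadd f g)) = (\<lambda>x y. tensor_one (left_end f) x y + tensor_one (left_end g) x y)"
      by (simp add: tensor_one_def left_end_def zadd_def ring_distribs fun_eq_iff)
    show ?thesis
      unfolding rotation_hom_def sum by (simp add: rotation_hom_def zadd_apply mat_conj_add fun_eq_iff)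
  qed
  moreover have "rotation_hom p (zscale c f) = zscale c (rotation_hom p f)" for c f
  proof -
    have scale: "tensor_one (left_end (zscale c f)) = (\<lambda>x y. c * tensor_one (left_end f) x y)"
      by (simp add: tensor_one_def left_end_def zscale_def fun_eq_iff)
    show ?thesis
      unfolding rotation_hom_def scale by (simp add: rotation_hom_def zscale_apply mat_conj_scale fun_eq_iff)
  qed
  moreover have "rotation_hom p (zadj f) = zadj (rotation_hom p f)" for f
  proof -
    have adj: "tensor_one (left_end (zadj f)) = mat_adj (tensor_one (left_end f))"
      by (simp add: tensor_one_def left_end_def zadj_def mat_adj_def mat_one_def fun_eq_iff)
    show ?thesis
      unfolding rotation_hom_def adj by (auto simp: rotation_hom_def zadj_apply mat_conj_adj fun_eq_iff) (simp add: mat_adj_def)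
  qed
  ultimately show ?thesis
    using assms by (simp add: unital_star_hom_ends_def unital_star_hom_def rotation_hom_Zalg
        rotation_hom_zmult rotation_hom_zunit has_left_factor_rotation_hom has_right_factor_rotation_hom)
qed

section \<open>Block diagonal sums\<close>

definition block_diag :: "nat \<Rightarrow> (nat \<Rightarrow> nat \<Rightarrow> complex) \<Rightarrow> (nat \<Rightarrow> nat \<Rightarrow> complex) \<Rightarrow> nat \<Rightarrow> nat \<Rightarrow> complex"
  where "block_diag p M N = (\<lambda>i j. if i < p \<and> j < p then M i j
    else if p \<le> i \<and> p \<le> j then N (i - p) (j - p) else 0)"

definition tblock_diag :: "nat \<Rightarrow> tmat \<Rightarrow> tmat \<Rightarrow> tmat"
  where "tblock_diag p A B = (\<lambda>x y. if fst x < p \<and> fst y < p then A x y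
    else if p \<le> fst x \<and> p \<le> fst y then B (fst x - p, snd x) (fst y - p, snd y) else 0)"

lemma tidx_add_split:
  "tidx (p1 + p2) q = tidx p1 q \<union> (\<lambda>(k, l). (p1 + k, l)) ` tidx p2 q"
  (is "_ = _ \<union> ?shift ` _")
proof (intro set_eqI iffI)
  fix x assume "x \<in> tidx (p1 + p2) q"
  then show "x \<in> tidx p1 q \<union> ?shift ` tidx p2 q"
    by (cases "fst x < p1") (auto simp: mem_tidx_iff image_iff intro!: bexI[of _ "(fst x - p1, snd x)"])
qed (auto simp: mem_tidx_iff)

lemma sum_tidx_add:
  "(\<Sum>z\<in>tidx (p1 + p2) q. h z) = (\<Sum>z\<in>tidx p1 q. h z) + (\<Sum>w\<in>tidx p2 q. h (p1 + fst w, snd w))"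
proof -
  have "(\<Sum>z\<in>tidx (p1 + p2) q. h z) = (\<Sum>z\<in>tidx p1 q. h z) + (\<Sum>z\<in>(\<lambda>(k, l). (p1 + k, l)) ` tidx p2 q. h z)"
    unfolding tidx_add_split by (rule sum.union_disjoint) (auto simp: mem_tidx_iff)
  also have "(\<Sum>z\<in>(\<lambda>(k, l). (p1 + k, l)) ` tidx p2 q. h z) = (\<Sum>w\<in>tidx p2 q. h (p1 + fst w, snd w))"
    by (subst sum.reindex) (auto simp: inj_on_def split_def)
  finally show ?thesis .
qed

lemma tblock_diag_mult:
  "mat_mult (tidx (p1 + p2) q) (tblock_diag p1 A B) (tblock_diag p1 C D)
    = tblock_diag p1 (mat_mult (tidx p1 q) A C) (mat_mult (tidx p2 q) B D)"
proof (intro ext)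
  fix x y
  show "mat_mult (tidx (p1 + p2) q) (tblock_diag p1 A B) (tblock_diag p1 C D) x y
    = tblock_diag p1 (mat_mult (tidx p1 q) A C) (mat_mult (tidx p2 q) B D) x y"
    unfolding mat_mult_def sum_tidx_add
    by (auto simp: tblock_diag_def mem_tidx_iff intro!: sum.neutral)
qed

lemma tblock_diag_unit:
  "tblock_diag p1 (zunit p1 q t) (zunit p2 q t) = zunit (p1 + p2) q t"
  by (auto simp: tblock_diag_def zunit_def mem_tidx_iff prod_eq_iff fun_eq_iff)

lemma is_tmat_tblock_diag:
  assumes "is_tmat p1 q A" "is_tmat p2 q B"
  shows "is_tmat (p1 + p2) q (tblock_diag p1 A B)"
proof -
  have "tblock_diag p1 A B x y = 0" if "x \<notin> tidx (p1 + p2) q \<or> y \<notin> tidx (p1 + p2) q" for x y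
  proof -
    have "A x y = 0" if "fst x < p1" "fst y < p1"
      using \<open>x \<notin> _ \<or> _\<close> that by (intro is_tmatD[OF assms(1)]) (auto simp: mem_tidx_iff)
    moreover have "B (fst x - p1, snd x) (fst y - p1, snd y) = 0" if "p1 \<le> fst x" "p1 \<le> fst y"
      using \<open>x \<notin> _ \<or> _\<close> that by (intro is_tmatD[OF assms(2)]) (auto simp: mem_tidx_iff)
    ultimately show ?thesis
      by (simp add: tblock_diag_def)
  qed
  then show ?thesis
    by (simp add: is_tmat_def)
qed

lemma has_left_factor_tblock_diag:
  assumes "has_left_factor p1 q M A" "has_left_factor p2 q N B"
  shows "has_left_factor (p1 + p2) q (block_diag p1 M N) (tblock_diag p1 A B)"
  using assms by (auto simp: has_left_factor_def tblock_diag_def block_diag_def tensor_one_def mem_tidx_iff)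

lemma has_right_factor_tblock_diag:
  assumes "has_right_factor p1 q M A" "has_right_factor p2 q M B"
  shows "has_right_factor (p1 + p2) q M (tblock_diag p1 A B)"
  using assms by (auto simp: has_right_factor_def tblock_diag_def one_tensor_def mat_one_def mem_tidx_iff)

lemma continuous_on_tblock_diag:
  assumes "\<And>x y. continuous_on S (\<lambda>t. F t x y)" "\<And>x y. continuous_on S (\<lambda>t. G t x y)"
  shows "continuous_on S (\<lambda>t. tblock_diag p (F t) (G t) x y)"
proof -
  have eq: "(\<lambda>t. tblock_diag p (F t) (G t) x y) = (if fst x < p \<and> fst y < p then (\<lambda>t. F t x y)
      else if p \<le> fst x \<and> p \<le> fst y then (\<lambda>t. G t (fst x - p, snd x) (fst y - p, snd y)) else (\<lambda>t. 0))"
    by (auto simp: tblock_diag_def fun_eq_iff)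
  show ?thesis
    unfolding eq using assms by simp
qed

definition row_sum :: "nat \<Rightarrow> (tfun \<Rightarrow> tfun) \<Rightarrow> (tfun \<Rightarrow> tfun) \<Rightarrow> tfun \<Rightarrow> tfun"
  where "row_sum p \<phi> \<psi> f = (\<lambda>t. tblock_diag p (\<phi> f t) (\<psi> f t))"

lemma row_sum_Zalg:
  assumes "\<phi> f \<in> Zalg p1 q" "\<psi> f \<in> Zalg p2 q"
    and "has_left_factor p1 q L1 (\<phi> f 0)" "has_right_factor p1 q R (\<phi> f 1)"
    and "has_left_factor p2 q L2 (\<psi> f 0)" "has_right_factor p2 q R (\<psi> f 1)"
  shows "row_sum p1 \<phi> \<psi> f \<in> Zalg (p1 + p2) q"
proof (rule ZalgI)
  show "is_tmat (p1 + p2) q (row_sum p1 \<phi> \<psi> f t)" for t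
    using assms(1,2) by (simp add: row_sum_def is_tmat_tblock_diag ZalgD(1))
  show "row_sum p1 \<phi> \<psi> f t = (\<lambda>_ _. 0)" if "t \<notin> {0..1}" for t
    using ZalgD(2)[OF assms(1) that] ZalgD(2)[OF assms(2) that]
    by (auto simp: row_sum_def tblock_diag_def fun_eq_iff)
  show "continuous_on {0..1} (\<lambda>t. row_sum p1 \<phi> \<psi> f t x y)" for x y
    unfolding row_sum_def using assms(1,2) by (intro continuous_on_tblock_diag ZalgD(3))
  show "in_left (p1 + p2) q (row_sum p1 \<phi> \<psi> f 0)"
    using has_left_factor_tblock_diag[OF assms(3,5)] by (auto simp: row_sum_def in_left_iff)
  show "in_right (p1 + p2) q (row_sum p1 \<phi> \<psi> f 1)"
    using has_right_factor_tblock_diag[OF assms(4,6)] by (auto simp: row_sum_def in_right_iff)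
qed

lemma unital_star_hom_ends_row_sum:
  assumes \<phi>: "unital_star_hom_ends n m p1 q \<phi> L1 R"
    and \<psi>: "unital_star_hom_ends n m p2 q \<psi> L2 R"
  shows "unital_star_hom_ends n m (p1 + p2) q (row_sum p1 \<phi> \<psi>) (\<lambda>f. block_diag p1 (L1 f) (L2 f)) R"
proof -
  have hom: "unital_star_hom n m p1 q \<phi>" "unital_star_hom n m p2 q \<psi>"
    using \<phi> \<psi> by (simp_all add: unital_star_hom_ends_def)
  have "row_sum p1 \<phi> \<psi> f \<in> Zalg (p1 + p2) q"
    and "has_left_factor (p1 + p2) q (block_diag p1 (L1 f) (L2 f)) (row_sum p1 \<phi> \<psi> f 0)"
    and "has_right_factor (p1 + p2) q (R f) (row_sum p1 \<phi> \<psi> f 1)"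
    if "f \<in> Zalg n m" for f
  proof -
    note ends = unital_star_hom_endsD[OF \<phi> that] unital_star_hom_endsD[OF \<psi> that]
    show "row_sum p1 \<phi> \<psi> f \<in> Zalg (p1 + p2) q"
      using unital_star_homD(1)[OF hom(1) that] unital_star_homD(1)[OF hom(2) that] ends
      by (rule row_sum_Zalg)
    show "has_left_factor (p1 + p2) q (block_diag p1 (L1 f) (L2 f)) (row_sum p1 \<phi> \<psi> f 0)"
      using has_left_factor_tblock_diag[OF ends(1,3)] by (simp add: row_sum_def)
    show "has_right_factor (p1 + p2) q (R f) (row_sum p1 \<phi> \<psi> f 1)"
      using has_right_factor_tblock_diag[OF ends(2,4)] by (simp add: row_sum_def)
  qed
  moreover have "row_sum p1 \<phi> \<psi> (zadd f g) = zadd (row_sum p1 \<phi> \<psi> f) (row_sum p1 \<phi> \<psi> g)"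
    and "row_sum p1 \<phi> \<psi> (zscale c f) = zscale c (row_sum p1 \<phi> \<psi> f)"
    and "row_sum p1 \<phi> \<psi> (zadj f) = zadj (row_sum p1 \<phi> \<psi> f)"
    if "f \<in> Zalg n m" "g \<in> Zalg n m" for f g c
    using that unital_star_homD[OF hom(1)] unital_star_homD[OF hom(2)]
    by (auto simp: row_sum_def zadd_def zscale_def zadj_def tblock_diag_def fun_eq_iff)
  moreover have "row_sum p1 \<phi> \<psi> (zmult n m f g) = zmult (p1 + p2) q (row_sum p1 \<phi> \<psi> f) (row_sum p1 \<phi> \<psi> g)"
    if "f \<in> Zalg n m" "g \<in> Zalg n m" for f g
    using that unital_star_homD[OF hom(1)] unital_star_homD[OF hom(2)]
    by (simp add: row_sum_def zmult_eq tblock_diag_mult)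
  moreover have "row_sum p1 \<phi> \<psi> (zunit n m) = zunit (p1 + p2) q"
    using unital_star_homD(6)[OF hom(1)] unital_star_homD(6)[OF hom(2)]
    by (simp add: row_sum_def tblock_diag_unit)
  ultimately show ?thesis
    by (simp add: unital_star_hom_ends_def unital_star_hom_def)
qed

fun row_power :: "nat \<Rightarrow> nat \<Rightarrow> (tfun \<Rightarrow> tfun) \<Rightarrow> tfun \<Rightarrow> tfun"
  where
    "row_power p 0 \<phi> = (\<lambda>f t x y. 0)"
  | "row_power p (Suc k) \<phi> = row_sum p \<phi> (row_power p k \<phi>)"

fun block_diag_power :: "nat \<Rightarrow> nat \<Rightarrow> (nat \<Rightarrow> nat \<Rightarrow> complex) \<Rightarrow> nat \<Rightarrow> nat \<Rightarrow> complex"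
  where
    "block_diag_power p 0 M = (\<lambda>i j. 0)"
  | "block_diag_power p (Suc k) M = block_diag p M (block_diag_power p k M)"

lemma unital_star_hom_ends_row_power:
  assumes "unital_star_hom_ends n m p q \<phi> L R"
  shows "unital_star_hom_ends n m (k * p) q (row_power p k \<phi>) (\<lambda>f. block_diag_power p k (L f)) R"
proof (induction k)
  case 0
  show ?case
    by (simp add: unital_star_hom_ends_zero)
next
  case (Suc k)
  show ?case
    using unital_star_hom_ends_row_sum[OF assms Suc.IH] by simp
qed

definition row_blocks :: "nat \<Rightarrow> nat \<Rightarrow> nat \<Rightarrow> nat \<Rightarrow> (tfun \<Rightarrow> tfun) \<Rightarrow> (tfun \<Rightarrow> tfun) \<Rightarrow> tfun \<Rightarrow> tfun"
  where "row_blocks a b p p' \<phi> \<psi> = row_sum (a * p) (row_power p a \<phi>) (row_power p' b \<psi>)"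

definition col_blocks :: "nat \<Rightarrow> nat \<Rightarrow> nat \<Rightarrow> nat \<Rightarrow> (tfun \<Rightarrow> tfun) \<Rightarrow> (tfun \<Rightarrow> tfun) \<Rightarrow> tfun \<Rightarrow> tfun"
  where "col_blocks a b q q' \<phi> \<psi> = zflip \<circ> row_blocks a b q q' (zflip \<circ> \<phi>) (zflip \<circ> \<psi>)"

lemma unital_star_hom_ends_row_blocks:
  assumes "unital_star_hom_ends n m p q \<phi> L1 R" "unital_star_hom_ends n m p' q \<psi> L2 R"
  shows "unital_star_hom_ends n m (a * p + b * p') q (row_blocks a b p p' \<phi> \<psi>)
    (\<lambda>f. block_diag (a * p) (block_diag_power p a (L1 f)) (block_diag_power p' b (L2 f))) R"
  unfolding row_blocks_def
  by (intro unital_star_hom_ends_row_sum unital_star_hom_ends_row_power assms)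

lemma unital_star_hom_ends_col_blocks:
  assumes "unital_star_hom_ends n m p q \<phi> L R1" "unital_star_hom_ends n m p q' \<psi> L R2"
  shows "unital_star_hom_ends n m p (a * q + b * q') (col_blocks a b q q' \<phi> \<psi>)
    L (\<lambda>f. block_diag (a * q) (block_diag_power q a (R1 f)) (block_diag_power q' b (R2 f)))"
  unfolding col_blocks_def
  by (intro unital_star_hom_ends_zflip unital_star_hom_ends_row_blocks assms)

lemma exists_unital_star_hom_block_sum:
  assumes "0 < n" "0 < m"
  shows "\<exists>\<phi>. unital_star_hom n m (a * n + b * m) (a' * n + b' * m) \<phi>"
proof -
  have nn: "unital_star_hom_ends n m n n (rotation_hom n) left_end left_end"
    using unital_star_hom_ends_rotation_hom[OF assms(2)] .
  have nm: "unital_star_hom_ends n m n m id left_end right_end"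
    using unital_star_hom_ends_id[OF assms] .
  have mn: "unital_star_hom_ends n m m n zflip right_end left_end"
    using unital_star_hom_ends_zflip[OF nm] by simp
  have mm: "unital_star_hom_ends n m m m (rotation_hom m \<circ> zflip) right_end right_end"
    using unital_star_hom_ends_comp[OF mn unital_star_hom_ends_rotation_hom[OF assms(1)]]
    by (simp add: left_end_zflip)
  \<comment> \<open>both row blocks have the same left factor ?L at 0, so they can be summed along the second tensor factor\<close>
  let ?L = "\<lambda>f. block_diag (a * n) (block_diag_power n a (left_end f)) (block_diag_power m b (right_end f))"
  have "unital_star_hom_ends n m (a * n + b * m) n (row_blocks a b n m (rotation_hom n) zflip) ?L left_end"
    using unital_star_hom_ends_row_blocks[OF nn mn] .
  moreover have "unital_star_hom_ends n m (a * n + b * m) m (row_blocks a b n m id (rotation_hom m \<circ> zflip)) ?L right_end"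
    using unital_star_hom_ends_row_blocks[OF nm mm] .
  ultimately have "unital_star_hom_ends n m (a * n + b * m) (a' * n + b' * m)
      (col_blocks a' b' n m (row_blocks a b n m (rotation_hom n) zflip) (row_blocks a b n m id (rotation_hom m \<circ> zflip)))
      ?L (\<lambda>f. block_diag (a' * n) (block_diag_power n a' (left_end f)) (block_diag_power m b' (right_end f)))"
    by (rule unital_star_hom_ends_col_blocks)
  then show ?thesis
    unfolding unital_star_hom_ends_def by blast
qed

lemma nat_eq_lincomb_consecutive:
  fixes n N :: nat
  assumes "n * (n - 1) \<le> N"
  shows "\<exists>a b. N = a * n + b * (n + 1)"
proof (cases "n = 0")
  case True
  then show ?thesis
    by auto
next
  case False
  have "N mod n \<le> n - 1"
    using False by (simp add: less_Suc_eq_le[symmetric])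
  also have "n - 1 \<le> N div n"
    using False assms by (simp add: less_eq_div_iff_mult_less_eq mult.commute)
  finally have "N = (N div n - N mod n) * n + N mod n * (n + 1)"
    by (simp add: algebra_simps diff_mult_distrib)
  then show ?thesis
    by blast
qed

theorem lemma5p10:
  fixes n :: nat
  assumes "n \<ge> 1"
  shows "\<exists>k::nat. \<exists>\<phi>. unital_star_hom n (n+1) (2^k) (2^k+1) \<phi>"
proof -
  have bound: "n * (n - 1) \<le> 2 ^ (n * n)"
    using less_exp[of "n * n"] by (meson diff_le_self less_imp_le mult_le_mono2 order.trans)
  obtain a b where ab: "2 ^ (n * n) = a * n + b * (n + 1)"
    using nat_eq_lincomb_consecutive[OF bound] by blast
  obtain a' b' where ab': "2 ^ (n * n) + 1 = a' * n + b' * (n + 1)"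
    using nat_eq_lincomb_consecutive[OF le_SucI[OF bound]] by (metis Suc_eq_plus1)
  obtain \<phi> where "unital_star_hom n (n + 1) (a * n + b * (n + 1)) (a' * n + b' * (n + 1)) \<phi>"
    using exists_unital_star_hom_block_sum[of n "n + 1" a b a' b'] assms by auto
  then have "unital_star_hom n (n + 1) (2 ^ (n * n)) (2 ^ (n * n) + 1) \<phi>"
    by (simp only: ab[symmetric] ab'[symmetric])
  then show ?thesis
    by blast
qed

end
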